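(* Let $\mu_0,\mu_1,\dots,\mu_\ell$ be the sequence of distributions obtained by applying a sequence of lossy moves $v_1^\downarrow,\dots,v_\ell^\downarrow$ to $\mu_0$. Then there is a sequence of distributions $\mu'_0,\mu'_1,\dots,\mu'_\ell$ obtained from $\mu'_0=\mu_0$ by a weight-constrained sequence of moves such that $\mu'_i(\{x\})\ge\mu_i(\{x\})$ for every $1\le i\le\ell$ and every $x\in\mathbb R$.
   Context: A distribution is a finite set $\{(x_1,m_1),\dots,(x_k,m_k)\}$ with $m_i>0$; signed distributions allow arbitrary real $m_i$; $\mu(A)=\sum_{x_i\in A}m_i$; $M_j[\mu]=\sum_i m_ix_i^j$. A move $v=([a,b],\delta)$ has $b-a=1$, $\delta$ a signed distribution on $[a,b]$ with $M_0[\delta]=M_1[\delta]=0$, center $\frac{a+b}2$; it can be applied to $\mu$ if $\mu+\delta$ is a distribution, giving $v\mu=\mu+\delta$. The lossy move $v^\downarrow=([a,b],\delta-\{(\frac{a+b}2,1)\})$ is applied analogously. For a sequence of moves producing $\mu_0,\dots,\mu_\ell$, $\mu_{\max}\{x>a\}=\max_i\mu_i\{x>a\}$; the sequence is weight-constrained if for every $a\in\mathbb R$ the number of its moves centered in $(a,\infty)$ is at most $\mu_{\max}\{x>a\}$. *)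

theory Defs
  imports Complex_Main
begin

text \<open>A (signed) distribution is represented as a finitely supported function
  real => real: the point x carries mass d x; the pairs (x_i, m_i) are the points
  of the support with their masses.\<close>

type_synonym sdist = "real \<Rightarrow> real"

definition supp :: "sdist \<Rightarrow> real set" where
  "supp d = {x. d x \<noteq> 0}"

definition signed_dist :: "sdist \<Rightarrow> bool" where
  "signed_dist d \<longleftrightarrow> finite (supp d)"

definition is_dist :: "sdist \<Rightarrow> bool" where
  "is_dist d \<longleftrightarrow> signed_dist d \<and> (\<forall>x. d x \<ge> 0)"

definition mass :: "sdist \<Rightarrow> real set \<Rightarrow> real" where
  "mass d A = (\<Sum>x\<in>supp d \<inter> A. d x)"

definition moment :: "nat \<Rightarrow> sdist \<Rightarrow> real" where
  "moment j d = (\<Sum>x\<in>supp d. d x * x ^ j)"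

text \<open>A move is a pair (a, delta) standing for ([a, a+1], delta).\<close>
type_synonym move = "real \<times> sdist"

definition is_move :: "move \<Rightarrow> bool" where
  "is_move v \<longleftrightarrow> signed_dist (snd v) \<and> supp (snd v) \<subseteq> {fst v .. fst v + 1}
     \<and> moment 0 (snd v) = 0 \<and> moment 1 (snd v) = 0"

definition center :: "move \<Rightarrow> real" where
  "center v = (fst v + (fst v + 1)) / 2"

definition applies :: "move \<Rightarrow> sdist \<Rightarrow> sdist \<Rightarrow> bool" where
  "applies v mu nu \<longleftrightarrow> nu = (\<lambda>x. mu x + snd v x) \<and> is_dist nu"

definition lossy_applies :: "move \<Rightarrow> sdist \<Rightarrow> sdist \<Rightarrow> bool" where
  "lossy_applies v mu nu \<longleftrightarrow>
     nu = (\<lambda>x. mu x + snd v x - (if x = center v then 1 else 0)) \<and> is_dist nu"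

definition move_seq :: "nat \<Rightarrow> (nat \<Rightarrow> move) \<Rightarrow> (nat \<Rightarrow> sdist) \<Rightarrow> bool" where
  "move_seq l v mu \<longleftrightarrow> is_dist (mu 0) \<and>
     (\<forall>i\<in>{1..l}. is_move (v i) \<and> applies (v i) (mu (i - 1)) (mu i))"

definition mu_max :: "nat \<Rightarrow> (nat \<Rightarrow> sdist) \<Rightarrow> real \<Rightarrow> real" where
  "mu_max l mu a = Max ((\<lambda>i. mass (mu i) {a<..}) ` {0..l})"

definition weight_constrained :: "nat \<Rightarrow> (nat \<Rightarrow> move) \<Rightarrow> (nat \<Rightarrow> sdist) \<Rightarrow> bool" where
  "weight_constrained l v mu \<longleftrightarrow>
     (\<forall>a::real. real (card {i\<in>{1..l}. center (v i) > a}) \<le> mu_max l mu a)"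

end

theory Submission
  imports Defs
begin

text \<open>
  A lossy move differs from the ordinary move only by deleting one unit
  of mass at its centre.  So instead of deleting that unit we keep it: with
  c j = center (v j) and n_i(x) the number of j \<le> i with c j = x, the distributions
  mu'_i = mu_i + n_i arise from mu_0 by the ordinary moves v_1, ..., v_l, and they
  dominate mu_i pointwise since n_i \<ge> 0.  The sequence is weight-constrained because
  the retained units already witness the bound at the last step: for every a,
  mu'_l{x > a} \<ge> n_l{x > a} = #{j \<le> l. c j > a}.
\<close>

lemma mass_singleton: "mass d {x} = d x"
  by (cases "d x = 0") (auto simp: mass_def supp_def)

lemma mass_superset_supp:
  assumes "finite S" and "supp d \<subseteq> S"
  shows "mass d A = sum d (S \<inter> A)"
  unfolding mass_def by (rule sum.mono_neutral_left) (use assms in \<open>auto simp: supp_def\<close>)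

lemma mass_add:
  assumes "signed_dist f" and "signed_dist g"
  shows "mass (\<lambda>x. f x + g x) A = mass f A + mass g A"
proof -
  define S where "S = supp f \<union> supp g"
  have fin: "finite S" using assms by (simp add: S_def signed_dist_def)
  have "supp (\<lambda>x. f x + g x) \<subseteq> S" by (auto simp: S_def supp_def)
  then have "mass (\<lambda>x. f x + g x) A = (\<Sum>x\<in>S \<inter> A. f x + g x)"
    by (rule mass_superset_supp[OF fin])
  also have "\<dots> = sum f (S \<inter> A) + sum g (S \<inter> A)" by (rule sum.distrib)
  also have "\<dots> = mass f A + mass g A"
    using mass_superset_supp[OF fin, of f A] mass_superset_supp[OF fin, of g A]
    by (simp add: S_def)
  finally show ?thesis .
qed

lemma mass_nonneg: "is_dist d \<Longrightarrow> mass d A \<ge> 0"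
  by (auto simp: mass_def is_dist_def intro: sum_nonneg)

lemma is_dist_add:
  assumes "is_dist f" and "is_dist g"
  shows "is_dist (\<lambda>x. f x + g x)"
proof -
  have "supp (\<lambda>x. f x + g x) \<subseteq> supp f \<union> supp g" by (auto simp: supp_def)
  then show ?thesis
    using assms by (auto simp: is_dist_def signed_dist_def intro: finite_subset add_nonneg_nonneg)
qed

text \<open>center_count c i x is the number of indices j \<in> {1..i} with c j = x: the total
  mass that the first i lossy moves have removed at the point x.\<close>
definition center_count :: "(nat \<Rightarrow> real) \<Rightarrow> nat \<Rightarrow> sdist" where
  "center_count c i x = real (card {j\<in>{1..i}. c j = x})"

lemma center_count_0: "center_count c 0 = (\<lambda>x. 0)"
  by (auto simp: center_count_def fun_eq_iff)

lemma center_count_Suc: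
  "center_count c (Suc i) x = center_count c i x + (if x = c (Suc i) then 1 else 0)"
proof -
  have split: "{j\<in>{1..Suc i}. c j = x} =
      (if x = c (Suc i) then insert (Suc i) {j\<in>{1..i}. c j = x} else {j\<in>{1..i}. c j = x})"
    by (auto simp: le_Suc_eq)
  show ?thesis
    unfolding center_count_def split by simp
qed

lemma supp_center_count: "supp (center_count c i) = c ` {1..i}"
  by (auto simp: supp_def center_count_def card_eq_0_iff)

lemma is_dist_center_count: "is_dist (center_count c i)"
  by (simp add: is_dist_def signed_dist_def supp_center_count center_count_def)

lemma mass_center_count_tail:
  "mass (center_count c i) {a<..} = real (card {j\<in>{1..i}. c j > a})"
proof -
  have "mass (center_count c i) {a<..} =
      (\<Sum>y\<in>c ` {1..i} \<inter> {a<..}. \<Sum>j\<in>{j\<in>{j\<in>{1..i}. c j > a}. c j = y}. 1)"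
    unfolding mass_def supp_center_count center_count_def
    by (intro sum.cong refl) (simp, metis (lifting))
  also have "\<dots> = (\<Sum>j\<in>{j\<in>{1..i}. c j > a}. (1::real))"
    by (rule sum.group) auto
  finally show ?thesis by simp
qed

lemma lossy_seq_is_dist:
  fixes mu :: "nat \<Rightarrow> sdist" and i :: nat
  assumes "is_dist (mu 0)"
    and "\<forall>i\<in>{1..l}. lossy_applies (v i) (mu (i - 1)) (mu i)"
    and "i \<le> l"
  shows "is_dist (mu i)"
proof (cases i)
  case 0
  then show ?thesis using assms(1) by simp
next
  case (Suc k)
  then have "i \<in> {1..l}" using assms(3) by simp
  then show ?thesis using assms(2) unfolding lossy_applies_def by blast
qed

lemma lossy_step_lifts:
  assumes "lossy_applies v m n" and "is_dist g"
  shows "applies v (\<lambda>x. m x + g x)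
           (\<lambda>x. n x + (g x + (if x = center v then 1 else 0)))"
proof -
  have "is_dist (\<lambda>x::real. if x = center v then 1 else 0 :: real)"
    by (auto simp: is_dist_def signed_dist_def supp_def)
  then have "is_dist (\<lambda>x. n x + (g x + (if x = center v then 1 else 0)))"
    using assms by (intro is_dist_add) (auto simp: lossy_applies_def)
  then show ?thesis
    using assms(1) by (auto simp: applies_def lossy_applies_def fun_eq_iff)
qed

definition restored :: "(nat \<Rightarrow> move) \<Rightarrow> (nat \<Rightarrow> sdist) \<Rightarrow> nat \<Rightarrow> sdist" where
  "restored v mu i = (\<lambda>x. mu i x + center_count (\<lambda>j. center (v j)) i x)"

lemma restored_0: "restored v mu 0 = mu 0"
  by (simp add: restored_def center_count_0)

lemma restored_dominates: "mass (restored v mu i) {x} \<ge> mass (mu i) {x}"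
  by (simp add: mass_singleton restored_def center_count_def)

lemma restored_move_seq:
  assumes "is_dist (mu 0)"
    and "\<forall>i\<in>{1..l}. is_move (v i) \<and> lossy_applies (v i) (mu (i - 1)) (mu i)"
  shows "move_seq l v (restored v mu)"
  unfolding move_seq_def
proof (intro conjI ballI)
  show "is_dist (restored v mu 0)" using assms(1) by (simp add: restored_0)
next
  fix i assume i: "i \<in> {1..l}"
  then obtain k where k: "i = Suc k" by (cases i) auto
  show "is_move (v i)" using assms(2) i by blast
  have "lossy_applies (v i) (mu k) (mu i)" using assms(2) i k by fastforce
  then have "applies (v i) (\<lambda>x. mu k x + center_count (\<lambda>j. center (v j)) k x)
      (\<lambda>x. mu i x + (center_count (\<lambda>j. center (v j)) k x + (if x = center (v i) then 1 else 0)))"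
    by (rule lossy_step_lifts[OF _ is_dist_center_count])
  then show "applies (v i) (restored v mu (i - 1)) (restored v mu i)"
    by (simp add: k restored_def center_count_Suc add.assoc)
qed

text \<open>The restored units alone witness the weight constraint at the last step l.\<close>
lemma restored_weight_constrained:
  assumes "is_dist (mu l)"
  shows "weight_constrained l v (restored v mu)"
  unfolding weight_constrained_def
proof
  fix a :: real
  let ?n = "center_count (\<lambda>j. center (v j)) l"
  have "mass (restored v mu l) {a<..} = mass (mu l) {a<..} + mass ?n {a<..}"
    unfolding restored_def using assms is_dist_center_count
    by (intro mass_add) (auto simp: is_dist_def)
  then have "real (card {i\<in>{1..l}. center (v i) > a}) \<le> mass (restored v mu l) {a<..}"
    using mass_nonneg[OF assms] by (simp add: mass_center_count_tail)
  also have "\<dots> \<le> mu_max l (restored v mu) a" unfolding mu_max_def by (rule Max_ge) auto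
  finally show "real (card {i\<in>{1..l}. center (v i) > a}) \<le> mu_max l (restored v mu) a" .
qed

theorem mainTheorem8:
  fixes l :: nat and v :: "nat \<Rightarrow> move" and mu :: "nat \<Rightarrow> sdist"
  assumes "is_dist (mu 0)"
    and "\<forall>i\<in>{1..l}. is_move (v i) \<and> lossy_applies (v i) (mu (i - 1)) (mu i)"
  shows "\<exists>w mu'. mu' 0 = mu 0 \<and> move_seq l w mu' \<and> weight_constrained l w mu' \<and>
           (\<forall>i\<in>{1..l}. \<forall>x::real. mass (mu' i) {x} \<ge> mass (mu i) {x})"
proof -
  have "is_dist (mu l)"
    using lossy_seq_is_dist[of mu l v l] assms by blast
  then have "weight_constrained l v (restored v mu)"
    by (rule restored_weight_constrained)
  moreover have "move_seq l v (restored v mu)"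
    using assms by (rule restored_move_seq)
  ultimately show ?thesis
    using restored_0 restored_dominates by blast
qed

end
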